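(* For every homeomorphism $f:[0,1]\to[0,1]$ we have $h(\langle f\rangle,[0,1])=+\infty$, where $\langle f\rangle=\{f^n:n\in\mathbb{Z}\}$.
   Context: For a subgroup $G$ of the group of homeomorphisms of a space $A$ (acting by $gx=g(x)$), a nonempty subset $Y\subseteq A$ is invariant if $g(y)\in Y$ for all $g\in G$, $y\in Y$. The height of $(G,A)$ is $h(G,A)=\sup\{n\geq 0:$ there exist distinct closed invariant subsets $Y_0\subset Y_1\subset\cdots\subset Y_n=A\}$ (possibly $+\infty$). *)

theory Defs
  imports "HOL-Analysis.Analysis" "HOL-Library.Extended_Nat"
begin

definition int_iter :: "'a set \<Rightarrow> ('a \<Rightarrow> 'a) \<Rightarrow> int \<Rightarrow> ('a \<Rightarrow> 'a)" where
  "int_iter A f n = (if n \<ge> 0 then f ^^ nat n else (inv_into A f) ^^ nat (- n))"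

definition cyclic_group :: "'a set \<Rightarrow> ('a \<Rightarrow> 'a) \<Rightarrow> ('a \<Rightarrow> 'a) set" where
  "cyclic_group A f = {int_iter A f n | n. True}"

definition invariant_subset :: "('a \<Rightarrow> 'a) set \<Rightarrow> 'a set \<Rightarrow> 'a set \<Rightarrow> bool" where
  "invariant_subset G A Y \<longleftrightarrow> Y \<noteq> {} \<and> Y \<subseteq> A \<and> (\<forall>g\<in>G. \<forall>y\<in>Y. g y \<in> Y)"

definition height :: "('a \<Rightarrow> 'a) set \<Rightarrow> 'a topology \<Rightarrow> enat" where
  "height G X = Sup {enat n | n. \<exists>Y :: nat \<Rightarrow> 'a set.
      (\<forall>i\<le>n. closedin X (Y i) \<and> invariant_subset G (topspace X) (Y i))
    \<and> (\<forall>i<n. Y i \<subset> Y (Suc i)) \<and> Y n = topspace X}"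

end

theory Submission
  imports Defs
begin

text \<open>Closures of orbits of finite sets are closed invariant sets. If the orbit closure of
  every finite subset of some set \<open>D\<close> misses a point of \<open>D\<close>, adding such points one at a
  time gives strictly increasing chains of closed invariant sets of any length. For a
  homeomorphism \<open>f\<close> of \<open>[0,1]\<close> this happens in one of two ways. Either \<open>f\<close> is an involution,
  so orbits have at most two points while \<open>[0,1]\<close> is infinite; or \<open>f\<close> has a wandering open
  interval \<open>J\<close> (no positive iterate of \<open>f\<close> maps a point of \<open>J\<close> into \<open>J\<close>), so the orbit of a
  finite \<open>Q \<subseteq> J\<close> meets \<open>J\<close> only in \<open>Q\<close>. A wandering interval is the open interval between
  \<open>p\<close> and \<open>h p\<close>, where \<open>h\<close> is the increasing map \<open>f\<close> or \<open>f \<circ> f\<close> and \<open>h p \<noteq> p\<close>; when \<open>f\<close> is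
  decreasing, its odd iterates move this interval to the other side of the fixed point of \<open>f\<close>.\<close>

definition wandering :: "('a \<Rightarrow> 'a) \<Rightarrow> 'a set \<Rightarrow> bool" where
  "wandering f J \<longleftrightarrow> (\<forall>n>0. \<forall>x\<in>J. (f ^^ n) x \<notin> J)"

text \<open>For \<open>g\<close> the inverse of \<open>f\<close>, this is the orbit of \<open>Q\<close> under the cyclic group generated by \<open>f\<close>.\<close>

definition two_sided_orbit :: "('a \<Rightarrow> 'a) \<Rightarrow> ('a \<Rightarrow> 'a) \<Rightarrow> 'a set \<Rightarrow> 'a set" where
  "two_sided_orbit f g Q = (\<Union>n. (f ^^ n) ` Q \<union> (g ^^ n) ` Q)"

lemma funpow_closed: "f ` A \<subseteq> A \<Longrightarrow> x \<in> A \<Longrightarrow> (f ^^ n) x \<in> A"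
  by (induction n) auto

lemma funpow_funpow_inverse:
  assumes "g ` A \<subseteq> A" and "\<And>x. x \<in> A \<Longrightarrow> f (g x) = x" and "x \<in> A"
  shows "(f ^^ n) ((g ^^ n) x) = x"
  using assms(3)
proof (induction n arbitrary: x)
  case (Suc n)
  have "(f ^^ Suc n) ((g ^^ Suc n) x) = f ((f ^^ n) ((g ^^ n) (g x)))"
    by (simp add: funpow_swap1)
  with Suc assms(1,2) show ?case by auto
qed simp

subsection \<open>Chains of closed invariant sets\<close>

lemma invariant_subset_cyclic_groupI:
  assumes "Y \<noteq> {}" "Y \<subseteq> A" "f ` Y \<subseteq> Y" "inv_into A f ` Y \<subseteq> Y"
  shows "invariant_subset (cyclic_group A f) A Y"
  using assms funpow_closed[of f Y] funpow_closed[of "inv_into A f" Y]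
  by (auto simp: invariant_subset_def cyclic_group_def int_iter_def)

lemma height_eq_infinity_if_strict_chain:
  assumes closed: "\<And>k. closedin X (S k)"
    and invariant: "\<And>k. invariant_subset G (topspace X) (S k)"
    and strict: "\<And>k. S k \<subset> S (Suc k)"
    and invariant_space: "invariant_subset G (topspace X) (topspace X)"
  shows "height G X = \<infinity>"
proof -
  have proper: "S k \<subset> topspace X" for k
    using strict[of k] invariant[of "Suc k"] by (auto simp: invariant_subset_def)
  have chain: "enat n \<le> height G X" for n
  proof -
    define Y where "Y i = (if i < n then S i else topspace X)" for i
    have "(\<forall>i\<le>n. closedin X (Y i) \<and> invariant_subset G (topspace X) (Y i))
        \<and> (\<forall>i<n. Y i \<subset> Y (Suc i)) \<and> Y n = topspace X"
      using closed invariant strict proper invariant_space by (auto simp: Y_def)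
    then show ?thesis
      unfolding height_def by (intro Sup_upper) blast
  qed
  show ?thesis
  proof (cases "height G X")
    case (enat m)
    with chain[of "Suc m"] show ?thesis by simp
  qed simp
qed

subsection \<open>Orbits of a self-homeomorphism\<close>

lemma two_sided_orbit_commute: "two_sided_orbit f g Q = two_sided_orbit g f Q"
  unfolding two_sided_orbit_def by blast

lemma subset_two_sided_orbit: "Q \<subseteq> two_sided_orbit f g Q"
  unfolding two_sided_orbit_def by (auto intro: UN_I[of 0])

lemma two_sided_orbit_mono: "Q \<subseteq> R \<Longrightarrow> two_sided_orbit f g Q \<subseteq> two_sided_orbit f g R"
  unfolding two_sided_orbit_def by blast

lemma two_sided_orbit_subset:
  "f ` A \<subseteq> A \<Longrightarrow> g ` A \<subseteq> A \<Longrightarrow> Q \<subseteq> A \<Longrightarrow> two_sided_orbit f g Q \<subseteq> A"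
  unfolding two_sided_orbit_def using funpow_closed[of f A] funpow_closed[of g A] by blast

lemma image_two_sided_orbit_subset:
  assumes g_maps: "g ` A \<subseteq> A" and f_g: "\<And>x. x \<in> A \<Longrightarrow> f (g x) = x" and "Q \<subseteq> A"
  shows "f ` two_sided_orbit f g Q \<subseteq> two_sided_orbit f g Q"
proof (rule image_subsetI)
  fix y assume "y \<in> two_sided_orbit f g Q"
  then obtain n q where q: "q \<in> Q" and y: "y = (f ^^ n) q \<or> y = (g ^^ n) q"
    unfolding two_sided_orbit_def by blast
  have "\<exists>m. f y = (f ^^ m) q \<or> f y = (g ^^ m) q"
  proof (cases n)
    case (Suc m)
    have "(g ^^ m) q \<in> A" using funpow_closed[OF g_maps] q \<open>Q \<subseteq> A\<close> by blast
    then have "f ((g ^^ n) q) = (g ^^ m) q" by (simp add: Suc f_g)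
    with y show ?thesis by (metis funpow.simps(2) o_apply)
  qed (use y in \<open>auto intro: exI[of _ 1]\<close>)
  with q show "f y \<in> two_sided_orbit f g Q"
    unfolding two_sided_orbit_def by blast
qed

lemma exists_not_in_closure_of_if_finite_Int:
  assumes "t1_space X" "openin X J" "infinite J" "finite (S \<inter> J)"
  shows "\<exists>x\<in>J. x \<notin> X closure_of S"
proof -
  obtain x where x: "x \<in> J - S \<inter> J"
    using Diff_infinite_finite[OF assms(4,3)] by (metis finite.emptyI ex_in_conv)
  have "closedin X (S \<inter> J)"
    using assms(1,2,4) openin_subset by (auto simp: t1_space_closedin_finite)
  with assms(2) have "openin X (J - S \<inter> J)"
    by (rule openin_diff)
  moreover have "(J - S \<inter> J) \<inter> S = {}" by blast
  ultimately have "(J - S \<inter> J) \<inter> X closure_of S = {}"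
    by (simp add: openin_Int_closure_of_eq_empty)
  with x show ?thesis by blast
qed

locale self_homeomorphism =
  fixes X :: "'a topology" and f g :: "'a \<Rightarrow> 'a"
  assumes homeomorphic_maps: "homeomorphic_maps X X f g"
begin

lemma f_maps: "f ` topspace X \<subseteq> topspace X"
  and g_maps: "g ` topspace X \<subseteq> topspace X"
  and f_g: "x \<in> topspace X \<Longrightarrow> f (g x) = x"
  and g_f: "x \<in> topspace X \<Longrightarrow> g (f x) = x"
  using homeomorphic_maps by (auto simp: homeomorphic_maps_def continuous_map_def)

lemma inv_into_eq: "x \<in> topspace X \<Longrightarrow> inv_into (topspace X) f x = g x"
  by (metis f_g g_f g_maps image_subset_iff inj_on_inverseI inv_into_f_eq)

lemma invariant_subsetI:
  assumes "Y \<noteq> {}" "Y \<subseteq> topspace X" "f ` Y \<subseteq> Y" "g ` Y \<subseteq> Y"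
  shows "invariant_subset (cyclic_group (topspace X) f) (topspace X) Y"
proof (rule invariant_subset_cyclic_groupI[OF assms(1-3)])
  have "inv_into (topspace X) f ` Y = g ` Y"
    using assms(2) inv_into_eq by (intro image_cong) auto
  with assms(4) show "inv_into (topspace X) f ` Y \<subseteq> Y" by simp
qed

lemma invariant_closure_of_orbit:
  assumes Q: "Q \<subseteq> topspace X" "Q \<noteq> {}"
  shows "invariant_subset (cyclic_group (topspace X) f) (topspace X)
           (X closure_of two_sided_orbit f g Q)"
proof (rule invariant_subsetI)
  have cont: "continuous_map X X f" "continuous_map X X g"
    using homeomorphic_maps by (auto simp: homeomorphic_maps_def)
  have "f ` (X closure_of two_sided_orbit f g Q) \<subseteq> X closure_of (f ` two_sided_orbit f g Q)"
    by (rule continuous_map_image_closure_subset[OF cont(1)])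
  also have "\<dots> \<subseteq> X closure_of two_sided_orbit f g Q"
    by (intro closure_of_mono image_two_sided_orbit_subset[OF g_maps f_g Q(1)])
  finally show "f ` (X closure_of two_sided_orbit f g Q) \<subseteq> X closure_of two_sided_orbit f g Q" .
  have "g ` (X closure_of two_sided_orbit g f Q) \<subseteq> X closure_of (g ` two_sided_orbit g f Q)"
    by (rule continuous_map_image_closure_subset[OF cont(2)])
  also have "\<dots> \<subseteq> X closure_of two_sided_orbit g f Q"
    by (intro closure_of_mono image_two_sided_orbit_subset[OF f_maps g_f Q(1)])
  finally show "g ` (X closure_of two_sided_orbit f g Q) \<subseteq> X closure_of two_sided_orbit f g Q"
    by (simp add: two_sided_orbit_commute)
  have "Q \<subseteq> two_sided_orbit f g Q" by (rule subset_two_sided_orbit)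
  also have "\<dots> \<subseteq> X closure_of two_sided_orbit f g Q"
    by (intro closure_of_subset two_sided_orbit_subset[OF f_maps g_maps Q(1)])
  finally have "Q \<subseteq> X closure_of two_sided_orbit f g Q" .
  with Q(2) show "X closure_of two_sided_orbit f g Q \<noteq> {}" by blast
qed (rule closure_of_subset_topspace)

lemma height_eq_infinity_if_orbit_closures_miss:
  assumes D: "D \<subseteq> topspace X" "D \<noteq> {}"
    and miss: "\<And>Q. finite Q \<Longrightarrow> Q \<subseteq> D \<Longrightarrow> \<exists>x\<in>D. x \<notin> X closure_of two_sided_orbit f g Q"
  shows "height (cyclic_group (topspace X) f) X = \<infinity>"
proof -
  let ?C = "\<lambda>Q. X closure_of two_sided_orbit f g Q"
  let ?P = "\<lambda>_::nat. \<lambda>Q. finite Q \<and> Q \<noteq> {} \<and> Q \<subseteq> D"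
  let ?R = "\<lambda>_::nat. \<lambda>Q Q'. \<exists>x. x \<notin> ?C Q \<and> Q' = insert x Q"
  have "\<exists>Qs. \<forall>k. ?P k (Qs k) \<and> ?R k (Qs k) (Qs (Suc k))"
  proof (rule dependent_nat_choice)
    show "\<exists>Q. ?P 0 Q" using D(2) by blast
    show "\<exists>Q'. ?P (Suc k) Q' \<and> ?R k Q Q'" if Q: "?P k Q" for Q k
    proof -
      obtain x where "x \<in> D" "x \<notin> ?C Q" using miss[of Q] Q by blast
      with Q show ?thesis by (intro exI[of _ "insert x Q"]) auto
    qed
  qed
  then obtain Qs where Qs: "\<And>k. ?P k (Qs k)" and step: "\<And>k. ?R k (Qs k) (Qs (Suc k))"
    by blast
  have in_closure: "Qs k \<subseteq> ?C (Qs k)" for k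
  proof -
    have "Qs k \<subseteq> topspace X" using Qs[of k] D(1) by blast
    have "Qs k \<subseteq> two_sided_orbit f g (Qs k)" by (rule subset_two_sided_orbit)
    also have "\<dots> \<subseteq> ?C (Qs k)"
      by (intro closure_of_subset two_sided_orbit_subset[OF f_maps g_maps \<open>Qs k \<subseteq> topspace X\<close>])
    finally show ?thesis .
  qed
  show ?thesis
  proof (rule height_eq_infinity_if_strict_chain)
    show "invariant_subset (cyclic_group (topspace X) f) (topspace X) (?C (Qs k))" for k
      using Qs[of k] D(1) by (intro invariant_closure_of_orbit) auto
    show "?C (Qs k) \<subset> ?C (Qs (Suc k))" for k
    proof -
      obtain x where x: "x \<notin> ?C (Qs k)" and Qs_Suc: "Qs (Suc k) = insert x (Qs k)"
        using step[of k] by blast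
      have "?C (Qs k) \<subseteq> ?C (Qs (Suc k))"
        unfolding Qs_Suc by (intro closure_of_mono two_sided_orbit_mono) blast
      moreover have "x \<in> ?C (Qs (Suc k))" using in_closure[of "Suc k"] Qs_Suc by blast
      ultimately show ?thesis using x by blast
    qed
    show "invariant_subset (cyclic_group (topspace X) f) (topspace X) (topspace X)"
      using D by (intro invariant_subsetI f_maps g_maps) auto
  qed simp
qed

lemma two_sided_orbit_Int_wandering:
  assumes J: "J \<subseteq> topspace X" "wandering f J" and "Q \<subseteq> J"
  shows "two_sided_orbit f g Q \<inter> J \<subseteq> Q"
proof
  fix y assume y: "y \<in> two_sided_orbit f g Q \<inter> J"
  then obtain n q where q: "q \<in> Q" and n: "y = (f ^^ n) q \<or> y = (g ^^ n) q"
    unfolding two_sided_orbit_def by blast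
  have qJ: "q \<in> J" using q \<open>Q \<subseteq> J\<close> by blast
  show "y \<in> Q"
  proof (cases "n = 0")
    case True
    with n q show ?thesis by auto
  next
    case False
    from n have False
    proof
      assume "y = (f ^^ n) q"
      with qJ y False J(2) show False unfolding wandering_def by auto
    next
      assume "y = (g ^^ n) q"
      with qJ J(1) have "(f ^^ n) y = q"
        using funpow_funpow_inverse[OF g_maps f_g] by blast
      with qJ y False J(2) show False unfolding wandering_def by auto
    qed
    then show ?thesis ..
  qed
qed

lemma two_sided_orbit_finite_if_involution:
  assumes involution: "\<And>x. x \<in> topspace X \<Longrightarrow> f (f x) = x" and Q: "finite Q" "Q \<subseteq> topspace X"
  shows "finite (two_sided_orbit f g Q)"
proof -
  have g_eq: "g x = f x" if "x \<in> topspace X" for x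
    using g_f[of "f x"] f_maps that involution by auto
  have f_iter: "(f ^^ n) x \<in> {x, f x}" if "x \<in> topspace X" for n x
    using that involution by (induction n) auto
  have g_iter: "(g ^^ n) x = (f ^^ n) x" if "x \<in> topspace X" for n x
    using that funpow_closed[OF f_maps] g_eq by (induction n) auto
  have "two_sided_orbit f g Q \<subseteq> Q \<union> f ` Q"
  proof
    fix y assume "y \<in> two_sided_orbit f g Q"
    then obtain n q where q: "q \<in> Q" and y: "y = (f ^^ n) q \<or> y = (g ^^ n) q"
      unfolding two_sided_orbit_def by blast
    have "q \<in> topspace X" using Q(2) q by blast
    with q y f_iter[of q n] g_iter[of q n] show "y \<in> Q \<union> f ` Q" by auto
  qed
  with Q(1) show ?thesis by (meson finite_UnI finite_imageI finite_subset)
qed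

lemma height_eq_infinity_if_orbits_meet_finitely:
  assumes "t1_space X" "openin X J" "infinite J"
    and "\<And>Q. finite Q \<Longrightarrow> Q \<subseteq> J \<Longrightarrow> finite (two_sided_orbit f g Q \<inter> J)"
  shows "height (cyclic_group (topspace X) f) X = \<infinity>"
proof (rule height_eq_infinity_if_orbit_closures_miss)
  show "J \<subseteq> topspace X" using assms(2) by (rule openin_subset)
  show "J \<noteq> {}" using assms(3) by auto
  show "\<exists>x\<in>J. x \<notin> X closure_of two_sided_orbit f g Q" if "finite Q" "Q \<subseteq> J" for Q
    by (rule exists_not_in_closure_of_if_finite_Int[OF assms(1-3) assms(4)[OF that]])
qed

lemma height_eq_infinity_if_wandering:
  assumes "t1_space X" "openin X J" "infinite J" "wandering f J"
  shows "height (cyclic_group (topspace X) f) X = \<infinity>"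
proof (rule height_eq_infinity_if_orbits_meet_finitely[OF assms(1-3)])
  fix Q assume "finite Q" "Q \<subseteq> J"
  with two_sided_orbit_Int_wandering[OF openin_subset[OF assms(2)] assms(4)]
  show "finite (two_sided_orbit f g Q \<inter> J)" by (meson finite_subset)
qed

lemma height_eq_infinity_if_involution:
  assumes "t1_space X" "infinite (topspace X)" "\<And>x. x \<in> topspace X \<Longrightarrow> f (f x) = x"
  shows "height (cyclic_group (topspace X) f) X = \<infinity>"
proof (rule height_eq_infinity_if_orbits_meet_finitely[OF assms(1) openin_topspace assms(2)])
  fix Q assume "finite Q" "Q \<subseteq> topspace X"
  with two_sided_orbit_finite_if_involution[OF assms(3)]
  show "finite (two_sided_orbit f g Q \<inter> topspace X)" by blast
qed

end

subsection \<open>Homeomorphisms of a compact interval\<close>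

lemma continuous_inj_on_interval_strict_mono:
  fixes f :: "'a::linear_continuum_topology \<Rightarrow> 'b::linorder_topology"
  assumes cont: "continuous_on {a..b} f" and inj: "inj_on f {a..b}" and "f a < f b"
  shows "strict_mono_on {a..b} f"
proof (rule strict_mono_onI)
  have inner: "f a < f x \<and> f x < f b" if "a < x" "x < b" for x
    using continuous_inj_imp_mono[OF that cont inj] \<open>f a < f b\<close> by auto
  fix x y assume x: "x \<in> {a..b}" and y: "y \<in> {a..b}" and "x < y"
  then consider "x = a" "y = b" | "x = a" "y < b" | "a < x" "y = b" | "a < x" "y < b"
    by force
  then show "f x < f y"
  proof cases
    case 4
    have sub: "{a..y} \<subseteq> {a..b}" using y by auto
    have "x < b" using \<open>x < y\<close> 4(2) by (rule less_trans)
    with continuous_inj_imp_mono[OF \<open>a < x\<close> \<open>x < y\<close> continuous_on_subset[OF cont sub]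
        inj_on_subset[OF inj sub]] inner[OF \<open>a < x\<close>]
    show ?thesis by auto
  qed (use \<open>f a < f b\<close> inner \<open>x < y\<close> in auto)
qed

lemma continuous_inj_on_interval_monotone:
  fixes f :: "'a::linear_continuum_topology \<Rightarrow> real"
  assumes "continuous_on {a..b} f" "inj_on f {a..b}"
  shows "strict_mono_on {a..b} f \<or> strict_antimono_on {a..b} f"
proof (cases "a < b")
  case True
  then have "f a \<noteq> f b" using assms(2) by (auto dest: inj_onD)
  then consider "f a < f b" | "- f a < - f b" by fastforce
  then show ?thesis
  proof cases
    case 2
    have "strict_mono_on {a..b} (\<lambda>x. - f x)"
      using assms by (intro continuous_inj_on_interval_strict_mono 2)
        (auto intro: continuous_intros simp: inj_on_def)
    then show ?thesis by (auto simp: monotone_on_def)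
  qed (use assms continuous_inj_on_interval_strict_mono in blast)
qed (auto simp: monotone_on_def)

lemma strict_mono_on_wandering:
  fixes h :: "'a::linorder \<Rightarrow> 'a"
  assumes maps: "h ` A \<subseteq> A" and mono: "strict_mono_on A h" and p: "p \<in> A" "h p \<noteq> p"
  shows "wandering h (A \<inter> {min p (h p)<..<max p (h p)})"
  unfolding wandering_def
proof (intro allI impI ballI)
  have iter_less: "(h ^^ n) x < (h ^^ n) y" if "x \<in> A" "y \<in> A" "x < y" for n x y
    using that
  proof (induction n)
    case (Suc n)
    then show ?case using funpow_closed[OF maps] by (auto intro: strict_mono_onD[OF mono])
  qed simp
  have iter_le: "(h ^^ n) x \<le> (h ^^ n) y" if "x \<in> A" "y \<in> A" "x \<le> y" for n x y
    using iter_less[of x y n] that by (auto simp: order_le_less)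
  fix n :: nat and x assume "n > 0" and x: "x \<in> A \<inter> {min p (h p)<..<max p (h p)}"
  then obtain m where n: "n = Suc m" using gr0_implies_Suc by blast
  have hmp: "(h ^^ m) p \<in> A" using funpow_closed[OF maps p(1)] .
  show "(h ^^ n) x \<notin> A \<inter> {min p (h p)<..<max p (h p)}"
  proof (cases "p < h p")
    case True
    have "p \<le> (h ^^ k) p" for k
    proof (induction k)
      case (Suc k)
      with iter_le[of p "(h ^^ k) p" 1] p funpow_closed[OF maps] True show ?case by auto
    qed simp
    then have "h p \<le> (h ^^ n) p"
      using iter_le[of p "(h ^^ m) p" 1] p hmp n by auto
    moreover have "(h ^^ n) p < (h ^^ n) x" using iter_less[of p x n] p x True by auto
    ultimately show ?thesis using True by auto
  next
    case False
    then have "h p < p" using p(2) by auto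
    have "(h ^^ k) p \<le> p" for k
    proof (induction k)
      case (Suc k)
      with iter_le[of "(h ^^ k) p" p 1] p funpow_closed[OF maps] \<open>h p < p\<close> show ?case by auto
    qed simp
    then have "(h ^^ n) p \<le> h p"
      using iter_le[of "(h ^^ m) p" p 1] p hmp n by auto
    moreover have "(h ^^ n) x < (h ^^ n) p" using iter_less[of x p n] p x \<open>h p < p\<close> by auto
    ultimately show ?thesis using \<open>h p < p\<close> by auto
  qed
qed

lemma strict_antimono_on_funpow_side:
  fixes f :: "'a::linorder \<Rightarrow> 'a"
  assumes maps: "f ` A \<subseteq> A" and anti: "strict_antimono_on A f" and c: "c \<in> A" "f c = c"
    and x: "x \<in> A" "x \<noteq> c"
  shows "(f ^^ n) x \<noteq> c \<and> ((f ^^ n) x < c \<longleftrightarrow> (even n \<longleftrightarrow> x < c))"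
proof (induction n)
  case (Suc n)
  let ?y = "(f ^^ n) x"
  have y: "?y \<in> A" using funpow_closed[OF maps x(1)] .
  have "f ?y \<noteq> c \<and> (f ?y < c \<longleftrightarrow> \<not> ?y < c)"
  proof (cases "?y < c")
    case True
    then have "c < f ?y" using monotone_onD[OF anti y c(1)] c(2) by simp
    with True show ?thesis by auto
  next
    case False
    with Suc.IH have "c < ?y" by auto
    then have "f ?y < c" using monotone_onD[OF anti c(1) y] c(2) by simp
    with False show ?thesis by auto
  qed
  with Suc.IH show ?case by auto
qed (use x in auto)

lemma interval_self_map_fixed_point:
  fixes f :: "real \<Rightarrow> real"
  assumes "continuous_on {a..b} f" "f ` {a..b} \<subseteq> {a..b}" "a \<le> b"
  obtains c where "c \<in> {a..b}" "f c = c"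
proof -
  have "a \<in> {a..b}" "b \<in> {a..b}" using assms(3) by auto
  then have "f a \<in> {a..b}" "f b \<in> {a..b}" using assms(2) by blast+
  then have "\<exists>c. a \<le> c \<and> c \<le> b \<and> c - f c = 0"
    using assms(1,3) by (intro IVT') (auto intro: continuous_intros)
  with that show ?thesis by auto
qed

lemma strict_antimono_on_funpow_2:
  fixes f :: "'a::linorder \<Rightarrow> 'a"
  assumes maps: "f ` A \<subseteq> A" and anti: "strict_antimono_on A f"
  shows "strict_mono_on A (f ^^ 2)"
proof (rule strict_mono_onI)
  fix x y assume xy: "x \<in> A" "y \<in> A" "x < y"
  then have "f y < f x" "f x \<in> A" "f y \<in> A"
    using monotone_onD[OF anti] maps by blast+
  then show "(f ^^ 2) x < (f ^^ 2) y"
    using monotone_onD[OF anti] by (simp add: numeral_2_eq_2)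
qed

lemma strict_antimono_on_interval_wandering:
  fixes f :: "real \<Rightarrow> real"
  assumes cont: "continuous_on {a..b} f" and maps: "f ` {a..b} \<subseteq> {a..b}"
    and anti: "strict_antimono_on {a..b} f" and p: "p \<in> {a..b}" "f (f p) \<noteq> p"
  shows "\<exists>u v. u < v \<and> {u<..<v} \<subseteq> {a..b} \<and> wandering f {u<..<v}"
proof -
  define h where "h = f ^^ 2"
  define J where "J = {min p (h p)<..<max p (h p)}"
  have h: "h y = f (f y)" for y by (simp add: h_def numeral_2_eq_2)
  have "a \<le> b" using p(1) by auto
  then obtain c where c: "c \<in> {a..b}" "f c = c"
    by (rule interval_self_map_fixed_point[OF cont maps])
  have h_maps: "h ` {a..b} \<subseteq> {a..b}" using maps by (auto simp: h)
  have "strict_mono_on {a..b} h"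
    unfolding h_def by (rule strict_antimono_on_funpow_2[OF maps anti])
  with h_maps p have "wandering h ({a..b} \<inter> J)"
    unfolding J_def by (intro strict_mono_on_wandering) (auto simp: h)
  moreover have J_sub: "J \<subseteq> {a..b}"
  proof -
    have "h p \<in> {a..b}" using h_maps p by blast
    with p show ?thesis by (auto simp: J_def)
  qed
  ultimately have even_wander: "wandering h J" by (simp add: Int_absorb1)
  have pc: "p \<noteq> c" using p c by auto
  have side: "(f ^^ n) y < c \<longleftrightarrow> (even n \<longleftrightarrow> y < c)" "(f ^^ n) y \<noteq> c"
    if "y \<in> {a..b}" "y \<noteq> c" for n y
    using strict_antimono_on_funpow_side[OF maps anti c that] by auto
  have hp_side: "h p < c \<longleftrightarrow> p < c" "h p \<noteq> c"
    using side[OF p(1) pc, of 2] by (simp_all add: h_def)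
  have J_side: "y < c \<longleftrightarrow> p < c" "y \<noteq> c" if "y \<in> J" for y
    using that hp_side pc unfolding J_def by (auto simp: min_def max_def split: if_splits)
  have "wandering f J"
    unfolding wandering_def
  proof (intro allI impI ballI)
    fix n :: nat and y assume "n > 0" "y \<in> J"
    show "(f ^^ n) y \<notin> J"
    proof (cases "even n")
      case True
      then obtain m where "n = 2 * m" "m > 0" using \<open>n > 0\<close> by auto
      then have "(f ^^ n) y = (h ^^ m) y" by (simp add: h_def funpow_mult)
      with even_wander \<open>m > 0\<close> \<open>y \<in> J\<close> show ?thesis unfolding wandering_def by auto
    next
      case False
      have y: "y \<in> {a..b}" "y \<noteq> c" using J_sub \<open>y \<in> J\<close> J_side by auto
      have "(f ^^ n) y < c \<longleftrightarrow> \<not> p < c"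
        using side(1)[OF y, of n] J_side(1)[OF \<open>y \<in> J\<close>] False by simp
      then show ?thesis using J_side(1)[of "(f ^^ n) y"] by blast
    qed
  qed
  moreover have "min p (h p) < max p (h p)" using p by (auto simp: h)
  ultimately show ?thesis using J_sub unfolding J_def by blast
qed

lemma interval_involution_or_wandering:
  fixes f :: "real \<Rightarrow> real"
  assumes cont: "continuous_on {a..b} f" and inj: "inj_on f {a..b}"
    and maps: "f ` {a..b} \<subseteq> {a..b}"
  shows "(\<forall>x\<in>{a..b}. f (f x) = x) \<or> (\<exists>u v. u < v \<and> {u<..<v} \<subseteq> {a..b} \<and> wandering f {u<..<v})"
proof (cases "\<forall>x\<in>{a..b}. f (f x) = x")
  case False
  then obtain p where p: "p \<in> {a..b}" "f (f p) \<noteq> p" by blast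
  from continuous_inj_on_interval_monotone[OF cont inj]
  have "\<exists>u v. u < v \<and> {u<..<v} \<subseteq> {a..b} \<and> wandering f {u<..<v}"
  proof
    assume mono: "strict_mono_on {a..b} f"
    let ?J = "{min p (f p)<..<max p (f p)}"
    have fp: "f p \<noteq> p" using p(2) by auto
    have "f p \<in> {a..b}" using maps p(1) by blast
    then have J_sub: "?J \<subseteq> {a..b}" using p(1) by auto
    have "wandering f ({a..b} \<inter> ?J)"
      by (rule strict_mono_on_wandering[OF maps mono p(1) fp])
    with J_sub have "wandering f ?J" by (simp add: Int_absorb1)
    moreover have "min p (f p) < max p (f p)" using fp by auto
    ultimately show ?thesis using J_sub by blast
  next
    assume "strict_antimono_on {a..b} f"
    then show ?thesis by (rule strict_antimono_on_interval_wandering[OF cont maps _ p])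
  qed
  then show ?thesis by (rule disjI2)
qed simp

theorem theorem2p4:
  fixes f :: "real \<Rightarrow> real"
  assumes "homeomorphic_map (top_of_set {0..1}) (top_of_set {0..1}) f"
  shows "height (cyclic_group {0..1} f) (top_of_set {0..1}) = \<infinity>"
proof -
  obtain g where maps: "homeomorphic_maps (top_of_set {0..1}) (top_of_set {0..1::real}) f g"
    using assms homeomorphic_map_maps by blast
  then interpret self_homeomorphism "top_of_set {0..1::real}" f g
    by unfold_locales
  have t1: "t1_space (top_of_set {0..1::real})"
    by (simp add: t1_space_euclidean t1_space_subtopology)
  have "continuous_on {0..1} f" using maps by (simp add: homeomorphic_maps_def)
  moreover have "inj_on f {0..1}" by (rule inj_on_inverseI[of _ g]) (use g_f in auto)
  moreover have "f ` {0..1} \<subseteq> {0..1}" using f_maps by simp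
  ultimately consider "\<forall>x\<in>{0..1}. f (f x) = x"
    | u v where "u < v" "{u<..<v} \<subseteq> {0..1}" "wandering f {u<..<v}"
    using interval_involution_or_wandering by blast
  then show ?thesis
  proof cases
    case 1
    with height_eq_infinity_if_involution[OF t1] show ?thesis by simp
  next
    case (2 u v)
    then have "openin (top_of_set {0..1}) {u<..<v}" by (simp add: open_subset)
    with height_eq_infinity_if_wandering[OF t1] 2 show ?thesis by simp
  qed
qed

end
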